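(* Let $\mathcal P_{XY}$ be any distribution on $\mathbb R^p\times\mathbb R$ and let $Z_i=(X_i,Y_i)$, $i=1,\dots,n+1$, be i.i.d. draws from $\mathcal P_{XY}$. Let $\mathcal Z=\{Z_1,\dots,Z_{n+1}\}$ and $\mathcal X=\{X_1,\dots,X_{n+1}\}$ denote the unordered sets of observations and of features. Let $V(z)=V(z;\mathcal Z)$ be a real-valued score function whose form may depend on the data only through $\mathcal Z$, and set $V_i=V(Z_i;\mathcal Z)$. Let $H:\mathbb R^p\times\mathbb R^p\to[0,1]$ be a localizer function whose form may depend on the data only through $\mathcal X$, with $H(x,x)=1$ for all $x$. Put $H_{ij}=H(X_i,X_j)$ and $p^H_{ij}=H_{ij}/\sum_{k=1}^{n+1}H_{ik}$, and define the weighted distributions $$\hat{\mathcal F}_i=\sum_{j=1}^{n+1}p^H_{ij}\delta_{V_j}\quad(i=1,\dots,n+1),\qquad \hat{\mathcal F}=\sum_{j=1}^{n}p^H_{n+1,j}\delta_{V_j}+p^H_{n+1,n+1}\delta_{+\infty}.$$ Let $\Gamma=\{\sum_{k\in I}p^H_{ik}: i\in\{1,\dots,n+1\},\ I\subseteq\{1,\dots,n+1\}\}$ and fix $\alpha\in(0,1)$. Let $\tilde\alpha$ be the smallest value in $\Gamma$ such that $$\frac{1}{n+1}\sum_{i=1}^{n+1}\mathbb 1\{V_i\le Q(\tilde\alpha;\hat{\mathcal F}_i)\}\ge\alpha.$$ Then $\mathbb P\{V_{n+1}\le Q(\tilde\alpha;\hat{\mathcal F}_{n+1})\}\ge\alpha$,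 and equivalently $\mathbb P\{V_{n+1}\le Q(\tilde\alpha;\hat{\mathcal F})\}\ge\alpha$.
   Context: For a distribution $\mathcal F$ on $\mathbb R\cup\{+\infty\}$, $Q(\alpha;\mathcal F)=\inf\{t:\mathbb P_{T\sim\mathcal F}(T\le t)\ge\alpha\}$ is its level-$\alpha$ quantile. $\delta_v$ is the point mass at $v$. All scores $V_i$ (and hence $\hat{\mathcal F}_i,\hat{\mathcal F},\tilde\alpha$) may depend on $Y_{n+1}$ through $\mathcal Z$. *)

theory Defs
  imports "HOL-Probability.Probability" "HOL-Library.Multiset"
begin

text \<open>Data: \<omega> i = Z_i = (X_i, Y_i) for i in {1..n+1}; the sample space is the
  (n+1)-fold product of the data distribution.\<close>

type_synonym 'p obs = "(real^'p) \<times> real"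

definition Zms :: "nat \<Rightarrow> (nat \<Rightarrow> 'p obs) \<Rightarrow> 'p obs multiset" where
  "Zms n \<omega> = image_mset \<omega> (mset_set {1..n+1})"

definition Xms :: "nat \<Rightarrow> (nat \<Rightarrow> 'p obs) \<Rightarrow> (real^'p) multiset" where
  "Xms n \<omega> = image_mset (\<lambda>i. fst (\<omega> i)) (mset_set {1..n+1})"

definition Vsc :: "('p obs multiset \<Rightarrow> 'p obs \<Rightarrow> real) \<Rightarrow> nat \<Rightarrow> (nat \<Rightarrow> 'p obs) \<Rightarrow> nat \<Rightarrow> real" where
  "Vsc V n \<omega> i = V (Zms n \<omega>) (\<omega> i)"

definition Hloc :: "((real^'p) multiset \<Rightarrow> real^'p \<Rightarrow> real^'p \<Rightarrow> real) \<Rightarrow> nat \<Rightarrow> (nat \<Rightarrow> 'p obs)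
    \<Rightarrow> nat \<Rightarrow> nat \<Rightarrow> real" where
  "Hloc H n \<omega> i j = H (Xms n \<omega>) (fst (\<omega> i)) (fst (\<omega> j))"

definition pH :: "((real^'p) multiset \<Rightarrow> real^'p \<Rightarrow> real^'p \<Rightarrow> real) \<Rightarrow> nat \<Rightarrow> (nat \<Rightarrow> 'p obs)
    \<Rightarrow> nat \<Rightarrow> nat \<Rightarrow> real" where
  "pH H n \<omega> i j = Hloc H n \<omega> i j / (\<Sum>k\<in>{1..n+1}. Hloc H n \<omega> i k)"

text \<open>Level-a quantile Q(a; F) = inf{t : P_{T~F}(T \<le> t) \<ge> a} of the discrete distribution
  F = sum_{j in I} w_j \<delta>_{v_j} on R \<union> {+\<infinity>} (t ranges over the extended reals).\<close>
definition wquantile :: "real \<Rightarrow> (nat \<Rightarrow> real) \<Rightarrow> (nat \<Rightarrow> ereal) \<Rightarrow> nat set \<Rightarrow> ereal" where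
  "wquantile a w v I = Inf {t. (\<Sum>j\<in>{j\<in>I. v j \<le> t}. w j) \<ge> a}"

definition QFi where
  "QFi V H n \<omega> a i = wquantile a (pH H n \<omega> i) (\<lambda>j. ereal (Vsc V n \<omega> j)) {1..n+1}"

definition QFhat where
  "QFhat V H n \<omega> a = wquantile a (pH H n \<omega> (n+1))
      (\<lambda>j. if j = n+1 then \<infinity> else ereal (Vsc V n \<omega> j)) {1..n+1}"

definition Gam where
  "Gam H n \<omega> = {\<Sum>k\<in>I. pH H n \<omega> i k | i I. i \<in> {1..n+1} \<and> I \<subseteq> {1..n+1}}"

definition alpha_tilde where
  "alpha_tilde V H n \<omega> a = Min {g \<in> Gam H n \<omega>.
      (1 / real (n+1)) * (\<Sum>i\<in>{1..n+1}. if ereal (Vsc V n \<omega> i) \<le> QFi V H n \<omega> g i then 1 else 0) \<ge> a}"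

end

theory Submission
  imports Defs
begin

text \<open>
  Let E_i be the event V_i \<le> Q(\<tilde>\<alpha>; \<hat>F_i). Swapping the observations i and n+1 preserves the
  product measure, leaves the unordered samples and hence \<Gamma> and \<tilde>\<alpha> unchanged, and maps
  E_{n+1} onto E_i, so all E_i have the same probability. By the choice of \<tilde>\<alpha>, at least
  \<alpha>(n+1) of the events E_i occur on every sample, whence (n+1) P(E_{n+1}) = \<Sum>_i P(E_i) \<ge> \<alpha>(n+1).
  Finally, V \<le> Q(t; F) holds iff the F-mass strictly below V is less than t, and moving the
  atom at V_{n+1} to +\<infinity> does not change the mass strictly below V_{n+1}.
\<close>

declare One_nat_def [simp del]

lemma le_wquantile_iff:
  fixes v :: "nat \<Rightarrow> ereal"
  assumes fin: "finite I" and w_nonneg: "\<And>j. j \<in> I \<Longrightarrow> 0 \<le> w j"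
  shows "ereal x \<le> wquantile a w v I \<longleftrightarrow> sum w {j\<in>I. v j < ereal x} < a"
proof
  assume x_le: "ereal x \<le> wquantile a w v I"
  show "sum w {j\<in>I. v j < ereal x} < a"
  proof (rule ccontr)
    assume "\<not> sum w {j\<in>I. v j < ereal x} < a"
    define J where "J = {j\<in>I. v j < ereal x}"
    define t where "t = Max (insert (-\<infinity>) (v ` J))"
    have "finite J" using fin by (simp add: J_def)
    then have "t < ereal x" and "J \<subseteq> {j\<in>I. v j \<le> t}"
      by (auto simp: t_def J_def)
    then have "sum w J \<le> sum w {j\<in>I. v j \<le> t}"
      by (intro sum_mono2) (auto simp: fin w_nonneg)
    with \<open>\<not> sum w {j\<in>I. v j < ereal x} < a\<close> have "wquantile a w v I \<le> t"
      unfolding wquantile_def J_def by (intro Inf_lower) simp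
    with x_le \<open>t < ereal x\<close> show False by simp
  qed
next
  assume below: "sum w {j\<in>I. v j < ereal x} < a"
  show "ereal x \<le> wquantile a w v I"
    unfolding wquantile_def
  proof (rule Inf_greatest, rule ccontr)
    fix t assume "t \<in> {t. a \<le> sum w {j\<in>I. v j \<le> t}}" and "\<not> ereal x \<le> t"
    then have "a \<le> sum w {j\<in>I. v j \<le> t}" and "{j\<in>I. v j \<le> t} \<subseteq> {j\<in>I. v j < ereal x}"
      by auto
    moreover from this(2) have "sum w {j\<in>I. v j \<le> t} \<le> sum w {j\<in>I. v j < ereal x}"
      by (intro sum_mono2) (auto simp: fin w_nonneg)
    ultimately show False using below by simp
  qed
qed

lemma wquantile_cong:
  assumes "\<And>j. j \<in> I \<Longrightarrow> w j = w' j" and "\<And>j. j \<in> I \<Longrightarrow> v j = v' j"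
  shows "wquantile a w v I = wquantile a w' v' I"
proof -
  have "sum w {j\<in>I. v j \<le> t} = sum w' {j\<in>I. v' j \<le> t}" for t
    using assms by (intro sum.cong) auto
  then show ?thesis
    unfolding wquantile_def by simp
qed

lemma wquantile_reindex:
  assumes "bij_betw \<pi> I J"
  shows "wquantile a (w \<circ> \<pi>) (v \<circ> \<pi>) I = wquantile a w v J"
proof -
  have "sum (w \<circ> \<pi>) {j\<in>I. v (\<pi> j) \<le> t} = sum w {j\<in>J. v j \<le> t}" for t
  proof -
    have "bij_betw \<pi> {j\<in>I. v (\<pi> j) \<le> t} {j\<in>J. v j \<le> t}"
      using assms by (auto simp: bij_betw_def inj_on_def)
    then show ?thesis unfolding comp_def by (rule sum.reindex_bij_betw)
  qed
  then show ?thesis unfolding wquantile_def by simp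
qed

definition empirical_coverage ::
    "('p::finite obs multiset \<Rightarrow> 'p obs \<Rightarrow> real) \<Rightarrow> ((real^'p) multiset \<Rightarrow> real^'p \<Rightarrow> real^'p \<Rightarrow> real)
      \<Rightarrow> nat \<Rightarrow> (nat \<Rightarrow> 'p obs) \<Rightarrow> real \<Rightarrow> real" where
  "empirical_coverage V H n \<omega> g =
     1 / real (n+1) * (\<Sum>i\<in>{1..n+1}. if ereal (Vsc V n \<omega> i) \<le> QFi V H n \<omega> g i then 1 else 0)"

lemma alpha_tilde_eq_Min:
  "alpha_tilde V H n \<omega> a = Min {g \<in> Gam H n \<omega>. a \<le> empirical_coverage V H n \<omega> g}"
  unfolding alpha_tilde_def empirical_coverage_def ..

definition covered ::
    "('p::finite obs multiset \<Rightarrow> 'p obs \<Rightarrow> real) \<Rightarrow> ((real^'p) multiset \<Rightarrow> real^'p \<Rightarrow> real^'p \<Rightarrow> real)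
      \<Rightarrow> nat \<Rightarrow> real \<Rightarrow> (nat \<Rightarrow> 'p obs) \<Rightarrow> nat \<Rightarrow> bool" where
  "covered V H n a \<omega> i \<longleftrightarrow> ereal (Vsc V n \<omega> i) \<le> QFi V H n \<omega> (alpha_tilde V H n \<omega> a) i"

lemma pH_nonneg:
  assumes "\<And>Xs x y. 0 \<le> H Xs x y"
  shows "0 \<le> pH H n \<omega> i j"
  unfolding pH_def Hloc_def by (intro divide_nonneg_nonneg sum_nonneg assms)

lemma le_QFi_iff:
  assumes "\<And>Xs x y. 0 \<le> H Xs x y"
  shows "ereal (Vsc V n \<omega> i) \<le> QFi V H n \<omega> g i
     \<longleftrightarrow> sum (pH H n \<omega> i) {j\<in>{1..n+1}. Vsc V n \<omega> j < Vsc V n \<omega> i} < g"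
  unfolding QFi_def by (subst le_wquantile_iff) (auto intro: pH_nonneg assms)

lemma le_QFhat_iff_le_QFi:
  assumes "\<And>Xs x y. 0 \<le> H Xs x y"
  shows "ereal (Vsc V n \<omega> (n+1)) \<le> QFhat V H n \<omega> g
     \<longleftrightarrow> ereal (Vsc V n \<omega> (n+1)) \<le> QFi V H n \<omega> g (n+1)"
proof -
  have "{j\<in>{1..n+1}. (if j = n+1 then \<infinity> else ereal (Vsc V n \<omega> j)) < ereal (Vsc V n \<omega> (n+1))}
      = {j\<in>{1..n+1}. Vsc V n \<omega> j < Vsc V n \<omega> (n+1)}"
    by auto
  then show ?thesis
    unfolding le_QFi_iff[where H=H, OF assms] QFhat_def
    by (subst le_wquantile_iff) (auto intro: pH_nonneg assms)
qed

lemma sum_Hloc_ge_1: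
  assumes H_nonneg: "\<And>Xs x y. 0 \<le> H Xs x y" and H_refl: "\<And>Xs x. H Xs x x = 1"
    and i: "i \<in> {1..n+1}"
  shows "1 \<le> (\<Sum>k\<in>{1..n+1}. Hloc H n \<omega> i k)"
proof -
  have "Hloc H n \<omega> i i \<le> (\<Sum>k\<in>{1..n+1}. Hloc H n \<omega> i k)"
    using i by (intro member_le_sum) (auto simp: Hloc_def H_nonneg)
  then show ?thesis
    by (simp add: Hloc_def H_refl)
qed

lemma sum_pH_eq_1:
  assumes "\<And>Xs x y. 0 \<le> H Xs x y" and "\<And>Xs x. H Xs x x = 1" and "i \<in> {1..n+1}"
  shows "(\<Sum>j\<in>{1..n+1}. pH H n \<omega> i j) = 1"
  using sum_Hloc_ge_1[where H=H, OF assms, of \<omega>]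
  unfolding pH_def by (simp add: sum_divide_distrib[symmetric])

lemma pH_diag_pos:
  assumes "\<And>Xs x y. 0 \<le> H Xs x y" and H_refl: "\<And>Xs x. H Xs x x = 1" and "i \<in> {1..n+1}"
  shows "0 < pH H n \<omega> i i"
  using sum_Hloc_ge_1[where H=H, OF assms, of \<omega>]
  unfolding pH_def by (simp add: Hloc_def H_refl)

lemma empirical_coverage_one:
  assumes H_nonneg: "\<And>Xs x y. 0 \<le> H Xs x y" and H_refl: "\<And>Xs x. H Xs x x = 1"
  shows "empirical_coverage V H n \<omega> 1 = 1"
proof -
  have "ereal (Vsc V n \<omega> i) \<le> QFi V H n \<omega> 1 i" if i: "i \<in> {1..n+1}" for i
  proof -
    have "sum (pH H n \<omega> i) {j\<in>{1..n+1}. Vsc V n \<omega> j < Vsc V n \<omega> i}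
        \<le> sum (pH H n \<omega> i) ({1..n+1} - {i})"
      by (intro sum_mono2) (auto intro: pH_nonneg H_nonneg)
    also have "\<dots> = 1 - pH H n \<omega> i i"
      using sum_pH_eq_1[where H=H, OF H_nonneg H_refl i] i by (simp add: sum_diff1)
    also have "\<dots> < 1"
      using pH_diag_pos[where H=H, OF H_nonneg H_refl i] by simp
    finally show ?thesis
      unfolding le_QFi_iff[where H=H, OF H_nonneg] .
  qed
  then show ?thesis
    unfolding empirical_coverage_def by simp
qed

lemma alpha_tilde_feasible:
  assumes H_nonneg: "\<And>Xs x y. 0 \<le> H Xs x y" and H_refl: "\<And>Xs x. H Xs x x = 1"
    and "a \<le> 1"
  shows "a \<le> empirical_coverage V H n \<omega> (alpha_tilde V H n \<omega> a)"
proof -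
  have "Gam H n \<omega> = (\<lambda>(i, I). sum (pH H n \<omega> i) I) ` ({1..n+1} \<times> Pow {1..n+1})"
    unfolding Gam_def by force
  then have "finite (Gam H n \<omega>)"
    by simp
  moreover have "1 \<in> Gam H n \<omega>"
    unfolding Gam_def using sum_pH_eq_1[where H=H, OF H_nonneg H_refl, of 1 n \<omega>]
    by (intro CollectI exI[of _ 1] exI[of _ "{1..n+1}"]) auto
  ultimately have "alpha_tilde V H n \<omega> a \<in> {g \<in> Gam H n \<omega>. a \<le> empirical_coverage V H n \<omega> g}"
    unfolding alpha_tilde_eq_Min using empirical_coverage_one[where H=H, OF H_nonneg H_refl] assms(3)
    by (intro Min_in) auto
  then show ?thesis
    by simp
qed

lemma covered_count_ge:
  assumes "\<And>Xs x y. 0 \<le> H Xs x y" and "\<And>Xs x. H Xs x x = 1" and "a \<le> 1"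
  shows "real (n+1) * a \<le> card {i \<in> {1..n+1}. covered V H n a \<omega> i}"
proof -
  have "a \<le> (\<Sum>i\<in>{1..n+1}. if covered V H n a \<omega> i then 1 else 0) / real (n+1)"
    using alpha_tilde_feasible[where H=H, OF assms, of V n \<omega>]
    unfolding empirical_coverage_def covered_def by simp
  then show ?thesis
    by (simp add: le_divide_eq mult.commute Int_def flip: of_bool_def)
qed

lemma Zms_permute:
  assumes "\<pi> permutes {1..n+1}"
  shows "Zms n (restrict (\<omega> \<circ> \<pi>) {1..n+1}) = Zms n \<omega>"
  unfolding Zms_def using assms by (rule permutes_implies_image_mset_eq[symmetric]) simp

lemma Xms_permute:
  assumes "\<pi> permutes {1..n+1}"
  shows "Xms n (restrict (\<omega> \<circ> \<pi>) {1..n+1}) = Xms n \<omega>"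
  unfolding Xms_def using assms by (rule permutes_implies_image_mset_eq[symmetric]) simp

lemma Vsc_permute:
  assumes "\<pi> permutes {1..n+1}" and "j \<in> {1..n+1}"
  shows "Vsc V n (restrict (\<omega> \<circ> \<pi>) {1..n+1}) j = Vsc V n \<omega> (\<pi> j)"
  using assms(2) unfolding Vsc_def Zms_permute[OF assms(1)] by simp

lemma Hloc_permute:
  assumes "\<pi> permutes {1..n+1}" and "i \<in> {1..n+1}" and "j \<in> {1..n+1}"
  shows "Hloc H n (restrict (\<omega> \<circ> \<pi>) {1..n+1}) i j = Hloc H n \<omega> (\<pi> i) (\<pi> j)"
  using assms(2,3) unfolding Hloc_def Xms_permute[OF assms(1)] by simp

lemma pH_permute:
  assumes \<pi>: "\<pi> permutes {1..n+1}" and "i \<in> {1..n+1}" and "j \<in> {1..n+1}"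
  shows "pH H n (restrict (\<omega> \<circ> \<pi>) {1..n+1}) i j = pH H n \<omega> (\<pi> i) (\<pi> j)"
proof -
  have "(\<Sum>k\<in>{1..n+1}. Hloc H n (restrict (\<omega> \<circ> \<pi>) {1..n+1}) i k)
      = (\<Sum>k\<in>{1..n+1}. Hloc H n \<omega> (\<pi> i) (\<pi> k))"
    using assms by (intro sum.cong) (auto simp: Hloc_permute)
  also have "\<dots> = (\<Sum>k\<in>{1..n+1}. Hloc H n \<omega> (\<pi> i) k)"
    using permutes_imp_bij[OF \<pi>] by (rule sum.reindex_bij_betw)
  finally show ?thesis
    using assms by (simp add: pH_def Hloc_permute)
qed

lemma sum_pH_permute:
  assumes \<pi>: "\<pi> permutes {1..n+1}" and "i \<in> {1..n+1}" and "I \<subseteq> {1..n+1}"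
  shows "sum (pH H n (restrict (\<omega> \<circ> \<pi>) {1..n+1}) i) I = sum (pH H n \<omega> (\<pi> i)) (\<pi> ` I)"
proof -
  have "sum (pH H n (restrict (\<omega> \<circ> \<pi>) {1..n+1}) i) I = (\<Sum>k\<in>I. pH H n \<omega> (\<pi> i) (\<pi> k))"
    using assms by (intro sum.cong) (auto simp: pH_permute)
  also have "\<dots> = sum (pH H n \<omega> (\<pi> i)) (\<pi> ` I)"
    using permutes_inj_on[OF \<pi>] by (simp add: sum.reindex)
  finally show ?thesis .
qed

lemma Gam_permute:
  assumes \<pi>: "\<pi> permutes {1..n+1}"
  shows "Gam H n (restrict (\<omega> \<circ> \<pi>) {1..n+1}) = Gam H n \<omega>"
proof (intro equalityI subsetI)
  fix x assume "x \<in> Gam H n (restrict (\<omega> \<circ> \<pi>) {1..n+1})"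
  then obtain i I where "i \<in> {1..n+1}" "I \<subseteq> {1..n+1}"
    and "x = sum (pH H n (restrict (\<omega> \<circ> \<pi>) {1..n+1}) i) I"
    unfolding Gam_def by blast
  moreover have "\<pi> i \<in> {1..n+1}" "\<pi> ` I \<subseteq> {1..n+1}"
    using calculation(1,2) permutes_in_image[OF \<pi>] by blast+
  ultimately show "x \<in> Gam H n \<omega>"
    unfolding Gam_def using \<pi> by (auto simp: sum_pH_permute)
next
  fix x assume "x \<in> Gam H n \<omega>"
  then obtain i I where i: "i \<in> {1..n+1}" and I: "I \<subseteq> {1..n+1}"
    and x: "x = sum (pH H n \<omega> i) I"
    unfolding Gam_def by blast
  have inv\<pi>: "inv \<pi> permutes {1..n+1}"
    using \<pi> by (rule permutes_inv)
  have inv_in: "inv \<pi> i \<in> {1..n+1}" "inv \<pi> ` I \<subseteq> {1..n+1}"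
    using i I permutes_in_image[OF inv\<pi>] by blast+
  then have "sum (pH H n (restrict (\<omega> \<circ> \<pi>) {1..n+1}) (inv \<pi> i)) (inv \<pi> ` I)
      = sum (pH H n \<omega> (\<pi> (inv \<pi> i))) (\<pi> ` inv \<pi> ` I)"
    by (rule sum_pH_permute[OF \<pi>])
  also have "\<dots> = x"
    by (simp add: x image_comp permutes_inverses(1)[OF \<pi>] permutes_inv_o(1)[OF \<pi>])
  finally have "x = sum (pH H n (restrict (\<omega> \<circ> \<pi>) {1..n+1}) (inv \<pi> i)) (inv \<pi> ` I)" ..
  with inv_in show "x \<in> Gam H n (restrict (\<omega> \<circ> \<pi>) {1..n+1})"
    unfolding Gam_def by blast
qed

lemma QFi_permute:
  assumes \<pi>: "\<pi> permutes {1..n+1}" and i: "i \<in> {1..n+1}"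
  shows "QFi V H n (restrict (\<omega> \<circ> \<pi>) {1..n+1}) g i = QFi V H n \<omega> g (\<pi> i)"
proof -
  have "QFi V H n (restrict (\<omega> \<circ> \<pi>) {1..n+1}) g i
      = wquantile g (pH H n \<omega> (\<pi> i) \<circ> \<pi>) ((\<lambda>j. ereal (Vsc V n \<omega> j)) \<circ> \<pi>) {1..n+1}"
    unfolding QFi_def using assms by (intro wquantile_cong) (auto simp: pH_permute Vsc_permute)
  also have "\<dots> = QFi V H n \<omega> g (\<pi> i)"
    unfolding QFi_def using permutes_imp_bij[OF \<pi>] by (rule wquantile_reindex)
  finally show ?thesis .
qed

lemma empirical_coverage_permute:
  assumes \<pi>: "\<pi> permutes {1..n+1}"
  shows "empirical_coverage V H n (restrict (\<omega> \<circ> \<pi>) {1..n+1}) g = empirical_coverage V H n \<omega> g"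
proof -
  have "(\<Sum>i\<in>{1..n+1}. if ereal (Vsc V n (restrict (\<omega> \<circ> \<pi>) {1..n+1}) i)
            \<le> QFi V H n (restrict (\<omega> \<circ> \<pi>) {1..n+1}) g i then 1 else 0)
      = (\<Sum>i\<in>{1..n+1}. (\<lambda>i. if ereal (Vsc V n \<omega> i) \<le> QFi V H n \<omega> g i then 1 else (0::real)) (\<pi> i))"
    using \<pi> by (intro sum.cong) (auto simp: Vsc_permute QFi_permute)
  also have "\<dots> = (\<Sum>i\<in>{1..n+1}. if ereal (Vsc V n \<omega> i) \<le> QFi V H n \<omega> g i then 1 else 0)"
    using permutes_imp_bij[OF \<pi>] by (rule sum.reindex_bij_betw)
  finally show ?thesis
    unfolding empirical_coverage_def by simp
qed

lemma alpha_tilde_permute: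
  assumes "\<pi> permutes {1..n+1}"
  shows "alpha_tilde V H n (restrict (\<omega> \<circ> \<pi>) {1..n+1}) a = alpha_tilde V H n \<omega> a"
  using assms by (simp add: alpha_tilde_eq_Min Gam_permute empirical_coverage_permute)

lemma covered_permute:
  assumes "\<pi> permutes {1..n+1}" and "i \<in> {1..n+1}"
  shows "covered V H n a (restrict (\<omega> \<circ> \<pi>) {1..n+1}) i \<longleftrightarrow> covered V H n a \<omega> (\<pi> i)"
  using assms by (simp add: covered_def Vsc_permute QFi_permute alpha_tilde_permute)

lemma borel_measurable_Min_filter:
  fixes f :: "'i \<Rightarrow> 'a \<Rightarrow> real"
  assumes K: "finite K"
    and f[measurable]: "\<And>p. p \<in> K \<Longrightarrow> f p \<in> borel_measurable M"
    and Q[measurable]: "\<And>p. p \<in> K \<Longrightarrow> Measurable.pred M (Q p)"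
    and nonempty: "\<And>x. x \<in> space M \<Longrightarrow> \<exists>p\<in>K. Q p x"
  shows "(\<lambda>x. Min ((\<lambda>p. f p x) ` {p\<in>K. Q p x})) \<in> borel_measurable M"
  unfolding borel_measurable_iff_le
proof
  fix t
  have "Min ((\<lambda>p. f p x) ` {p\<in>K. Q p x}) \<le> t \<longleftrightarrow> (\<exists>p\<in>K. Q p x \<and> f p x \<le> t)"
    if "x \<in> space M" for x
    using K nonempty[OF that] by (subst Min_le_iff) auto
  then have "{x \<in> space M. Min ((\<lambda>p. f p x) ` {p\<in>K. Q p x}) \<le> t}
      = {x \<in> space M. \<exists>p\<in>K. Q p x \<and> f p x \<le> t}"
    by blast
  also have "\<dots> \<in> sets M"
    using K by measurable
  finally show "{x \<in> space M. Min ((\<lambda>p. f p x) ` {p\<in>K. Q p x}) \<le> t} \<in> sets M" .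
qed

lemma borel_measurable_pH:
  assumes "\<And>i j. i \<in> {1..n+1} \<Longrightarrow> j \<in> {1..n+1} \<Longrightarrow> (\<lambda>\<omega>. Hloc H n \<omega> i j) \<in> borel_measurable N"
    and "i \<in> {1..n+1}" and "j \<in> {1..n+1}"
  shows "(\<lambda>\<omega>. pH H n \<omega> i j) \<in> borel_measurable N"
  unfolding pH_def using assms by (intro borel_measurable_divide borel_measurable_sum) auto

context
  fixes N :: "(nat \<Rightarrow> ('p::finite) obs) measure" and V H n
  assumes V_meas: "\<And>i. i \<in> {1..n+1} \<Longrightarrow> (\<lambda>\<omega>. Vsc V n \<omega> i) \<in> borel_measurable N"
    and Hloc_meas: "\<And>i j. i \<in> {1..n+1} \<Longrightarrow> j \<in> {1..n+1} \<Longrightarrow> (\<lambda>\<omega>. Hloc H n \<omega> i j) \<in> borel_measurable N"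
    and H_nonneg: "\<And>Xs x y. 0 \<le> H Xs x y"
begin

lemma pred_le_QFi:
  assumes g[measurable]: "g \<in> borel_measurable N" and i: "i \<in> {1..n+1}"
  shows "Measurable.pred N (\<lambda>\<omega>. ereal (Vsc V n \<omega> i) \<le> QFi V H n \<omega> (g \<omega>) i)"
proof -
  have [measurable]: "(\<lambda>\<omega>. Vsc V n \<omega> j) \<in> borel_measurable N" "(\<lambda>\<omega>. pH H n \<omega> i j) \<in> borel_measurable N"
    if "j \<in> {1..n+1}" for j
    using that i by (auto intro: V_meas borel_measurable_pH Hloc_meas)
  have "ereal (Vsc V n \<omega> i) \<le> QFi V H n \<omega> (g \<omega>) i
     \<longleftrightarrow> (\<Sum>j\<in>{1..n+1}. if Vsc V n \<omega> j < Vsc V n \<omega> i then pH H n \<omega> i j else 0) < g \<omega>" for \<omega>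
    unfolding le_QFi_iff[where H=H, OF H_nonneg] by (subst sum.inter_filter) simp_all
  moreover have "Measurable.pred N (\<lambda>\<omega>.
      (\<Sum>j\<in>{1..n+1}. if Vsc V n \<omega> j < Vsc V n \<omega> i then pH H n \<omega> i j else 0) < g \<omega>)"
    using i by measurable
  ultimately show ?thesis
    by simp
qed

lemma borel_measurable_empirical_coverage:
  assumes "g \<in> borel_measurable N"
  shows "(\<lambda>\<omega>. empirical_coverage V H n \<omega> (g \<omega>)) \<in> borel_measurable N"
proof -
  have [measurable]: "Measurable.pred N (\<lambda>\<omega>. ereal (Vsc V n \<omega> i) \<le> QFi V H n \<omega> (g \<omega>) i)"
    if "i \<in> {1..n+1}" for i
    using assms that by (rule pred_le_QFi)
  show ?thesis
    unfolding empirical_coverage_def by measurable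
qed

text \<open>\<Gamma> is the image of the finite index set of pairs (i, I), so \<tilde>\<alpha> is a minimum of finitely
  many measurable functions over a measurably selected set of indices.\<close>
lemma borel_measurable_alpha_tilde:
  assumes H_refl: "\<And>Xs x. H Xs x x = 1" and "a \<le> 1"
  shows "(\<lambda>\<omega>. alpha_tilde V H n \<omega> a) \<in> borel_measurable N"
proof -
  define K where "K = {1..n+1} \<times> Pow {1..n+1}"
  define S where "S p \<omega> = sum (pH H n \<omega> (fst p)) (snd p)" for p \<omega>
  have S_meas: "S p \<in> borel_measurable N" if "p \<in> K" for p
    using that unfolding S_def K_def
    by (intro borel_measurable_sum borel_measurable_pH[OF Hloc_meas]) auto
  have "{g \<in> Gam H n \<omega>. a \<le> empirical_coverage V H n \<omega> g}
      = (\<lambda>p. S p \<omega>) ` {p\<in>K. a \<le> empirical_coverage V H n \<omega> (S p \<omega>)}" for \<omega>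
    unfolding Gam_def K_def S_def by force
  then have "(\<lambda>\<omega>. alpha_tilde V H n \<omega> a)
      = (\<lambda>\<omega>. Min ((\<lambda>p. S p \<omega>) ` {p\<in>K. a \<le> empirical_coverage V H n \<omega> (S p \<omega>)}))"
    by (simp add: alpha_tilde_eq_Min)
  also have "\<dots> \<in> borel_measurable N"
  proof (rule borel_measurable_Min_filter)
    show "finite K"
      by (simp add: K_def)
    show "Measurable.pred N (\<lambda>\<omega>. a \<le> empirical_coverage V H n \<omega> (S p \<omega>))" if "p \<in> K" for p
      using borel_measurable_empirical_coverage[OF S_meas[OF that]] by measurable
    have "(1, {1..n+1}) \<in> K" and "S (1, {1..n+1}) \<omega> = 1" for \<omega>
      by (auto simp: K_def S_def sum_pH_eq_1[where H=H, OF H_nonneg H_refl])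
    then show "\<exists>p\<in>K. a \<le> empirical_coverage V H n \<omega> (S p \<omega>)" for \<omega>
      using empirical_coverage_one[where H=H, OF H_nonneg H_refl] \<open>a \<le> 1\<close>
      by (intro bexI[of _ "(1, {1..n+1})"]) auto
  qed (rule S_meas)
  finally show ?thesis .
qed

lemma sets_covered:
  assumes "\<And>Xs x. H Xs x x = 1" and "a \<le> 1" and "i \<in> {1..n+1}"
  shows "{\<omega> \<in> space N. covered V H n a \<omega> i} \<in> sets N"
  using pred_le_QFi[OF borel_measurable_alpha_tilde[OF assms(1,2)] assms(3)]
  unfolding covered_def pred_def .

end

lemma measure_PiM_permute:
  fixes M :: "'a measure"
  assumes M: "prob_space M" and \<pi>: "\<pi> permutes I"
    and Q: "Measurable.pred (PiM I (\<lambda>_. M)) Q"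
  shows "measure (PiM I (\<lambda>_. M)) {\<omega> \<in> space (PiM I (\<lambda>_. M)). Q (restrict (\<omega> \<circ> \<pi>) I)}
       = measure (PiM I (\<lambda>_. M)) {\<omega> \<in> space (PiM I (\<lambda>_. M)). Q \<omega>}"
proof -
  let ?P = "PiM I (\<lambda>_. M)" and ?T = "\<lambda>\<omega>. restrict (\<omega> \<circ> \<pi>) I"
  have T_meas: "?T \<in> measurable ?P ?P"
    using permutes_in_image[OF \<pi>] unfolding comp_def
    by (intro measurable_restrict measurable_component_singleton) auto
  have "distr ?P ?P ?T = ?P"
    using distr_PiM_reindex[of I "\<lambda>_. M" \<pi> I] M permutes_inj_on[OF \<pi>] permutes_in_image[OF \<pi>]
    by (simp add: comp_def)
  then have "measure ?P {\<omega> \<in> space ?P. Q \<omega>} = measure ?P (?T -` {\<omega> \<in> space ?P. Q \<omega>} \<inter> space ?P)"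
    using measure_distr[OF T_meas, of "{\<omega> \<in> space ?P. Q \<omega>}"] Q by (simp add: pred_def)
  also have "?T -` {\<omega> \<in> space ?P. Q \<omega>} \<inter> space ?P = {\<omega> \<in> space ?P. Q (?T \<omega>)}"
    using measurable_space[OF T_meas] by auto
  finally show ?thesis ..
qed

lemma (in prob_space) sum_prob_ge_of_indicator_sum_ge:
  assumes I: "finite I" and E: "\<And>i. i \<in> I \<Longrightarrow> E i \<in> events"
    and bound: "\<And>x. x \<in> space M \<Longrightarrow> c \<le> (\<Sum>i\<in>I. indicator (E i) x)"
  shows "c \<le> (\<Sum>i\<in>I. prob (E i))"
proof -
  have integrable: "integrable M (indicator (E i) :: 'a \<Rightarrow> real)" if "i \<in> I" for i
    using E[OF that] by (simp add: emeasure_eq_measure)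
  have "c = expectation (\<lambda>_. c)"
    by (simp add: prob_space)
  also have "\<dots> \<le> expectation (\<lambda>x. \<Sum>i\<in>I. indicator (E i) x)"
    using bound integrable by (intro integral_mono) auto
  also have "\<dots> = (\<Sum>i\<in>I. prob (E i))"
    using integrable E by (simp add: Bochner_Integration.integral_sum Int_absorb2 sets.sets_into_space)
  finally show ?thesis .
qed

lemma measure_covered_eq:
  fixes M :: "'p::finite obs measure"
  assumes M: "prob_space M" and i: "i \<in> {1..n+1}"
    and pred: "Measurable.pred (PiM {1..n+1} (\<lambda>_. M)) (\<lambda>\<omega>. covered V H n a \<omega> (n+1))"
  shows "measure (PiM {1..n+1} (\<lambda>_. M)) {\<omega> \<in> space (PiM {1..n+1} (\<lambda>_. M)). covered V H n a \<omega> i}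
       = measure (PiM {1..n+1} (\<lambda>_. M)) {\<omega> \<in> space (PiM {1..n+1} (\<lambda>_. M)). covered V H n a \<omega> (n+1)}"
proof -
  have \<pi>: "Transposition.transpose i (n+1) permutes {1..n+1}"
    using i by (intro permutes_swap_id) auto
  then have "covered V H n a (restrict (\<omega> \<circ> Transposition.transpose i (n+1)) {1..n+1}) (n+1)
      \<longleftrightarrow> covered V H n a \<omega> i" for \<omega>
    by (simp add: covered_permute)
  with measure_PiM_permute[OF M \<pi> pred] show ?thesis
    by simp
qed

theorem theorem1:
  fixes M :: "((real^'p) \<times> real) measure"
    and n :: nat
    and V :: "((real^'p) \<times> real) multiset \<Rightarrow> (real^'p) \<times> real \<Rightarrow> real"
    and H :: "(real^'p) multiset \<Rightarrow> real^'p \<Rightarrow> real^'p \<Rightarrow> real"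
    and \<alpha> :: real
  assumes "prob_space M"
    and "sets M = sets borel"
    and "\<And>Xs x y. 0 \<le> H Xs x y \<and> H Xs x y \<le> 1"
    and "\<And>Xs x. H Xs x x = 1"
    and "\<And>i. i \<in> {1..n+1} \<Longrightarrow>
           (\<lambda>\<omega>. Vsc V n \<omega> i) \<in> borel_measurable (PiM {1..n+1} (\<lambda>_. M))"
    and "\<And>i j. i \<in> {1..n+1} \<Longrightarrow> j \<in> {1..n+1} \<Longrightarrow>
           (\<lambda>\<omega>. Hloc H n \<omega> i j) \<in> borel_measurable (PiM {1..n+1} (\<lambda>_. M))"
    and "0 < \<alpha>" and "\<alpha> < 1"
  shows "measure (PiM {1..n+1} (\<lambda>_. M))
           {\<omega> \<in> space (PiM {1..n+1} (\<lambda>_. M)).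
              ereal (Vsc V n \<omega> (n+1)) \<le> QFi V H n \<omega> (alpha_tilde V H n \<omega> \<alpha>) (n+1)} \<ge> \<alpha>
       \<and> measure (PiM {1..n+1} (\<lambda>_. M))
           {\<omega> \<in> space (PiM {1..n+1} (\<lambda>_. M)).
              ereal (Vsc V n \<omega> (n+1)) \<le> QFhat V H n \<omega> (alpha_tilde V H n \<omega> \<alpha>)} \<ge> \<alpha>"
proof -
  define P where "P = PiM {1..n+1} (\<lambda>_. M)"
  define E where "E i = {\<omega> \<in> space P. covered V H n \<alpha> \<omega> i}" for i
  interpret P: prob_space P
    unfolding P_def using assms(1) by (rule prob_space_PiM)
  have H_nonneg: "\<And>Xs x y. 0 \<le> H Xs x y"
    using assms(3) by blast
  have E_sets: "E i \<in> P.events" if "i \<in> {1..n+1}" for i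
    unfolding E_def P_def using assms(4-6,8) that H_nonneg by (intro sets_covered) auto
  have prob_E_eq: "P.prob (E i) = P.prob (E (n+1))" if "i \<in> {1..n+1}" for i
    using E_sets[of "n+1"] that unfolding E_def P_def pred_def[symmetric]
    by (intro measure_covered_eq assms(1)) auto
  have "real (n+1) * \<alpha> \<le> (\<Sum>i\<in>{1..n+1}. P.prob (E i))"
  proof (rule P.sum_prob_ge_of_indicator_sum_ge)
    show "real (n+1) * \<alpha> \<le> (\<Sum>i\<in>{1..n+1}. indicator (E i) \<omega>)" if "\<omega> \<in> space P" for \<omega>
      using covered_count_ge[where H=H, OF H_nonneg assms(4), of \<alpha> n V \<omega>] assms(8) that
      by (simp add: E_def indicator_def Int_def)
  qed (simp_all add: E_sets)
  also have "\<dots> = (\<Sum>i\<in>{1..n+1}. P.prob (E (n+1)))"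
    by (rule sum.cong[OF refl prob_E_eq])
  finally have "\<alpha> \<le> P.prob (E (n+1))"
    by simp
  then show ?thesis
    unfolding P_def E_def covered_def by (simp add: le_QFhat_iff_le_QFi[where H=H, OF H_nonneg])
qed

end
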